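(* Let $(M,d)$ be a complete separable metric space. Then $c_0$ bi-Lipschitzly embeds into $M$ if and only if $\mathrm{I}^{\mathrm{Lip}}_{c_0}(M)\ge\omega_1$.
   Context: For finite $G\subset\mathbb{N}$ and countable $\mathbb{E}\subset\mathbb{R}$ with $0\in\mathbb{E}$, $[\mathbb{E},G]=\{f:\mathbb{N}\to\mathbb{E}:\mathrm{supp}(f)\subset G\}$, viewed as a subset of $c_0$. $\mathbb{E}$-bunches, the order $\preceq$ (for $\chi=(x_f)_{f\in[\mathbb{E},F]}$, $\psi=(y_f)_{f\in[\mathbb{E},G]}$: $F$ is an initial segment of $G$ and $y_f=x_f$ on $[\mathbb{E},F]$), $\mathbb{E}$-vines (sets of bunches closed under $\preceq$-predecessors), derivatives $\mathcal{V}^{(1)}=\mathcal{V}\setminus\{\preceq\text{-maximal elements}\}$, $\mathcal{V}^{(\alpha+1)}=(\mathcal{V}^{(\alpha)})^{(1)}$, $\mathcal{V}^{(\alpha)}=\bigcap_{\beta<\alpha}\mathcal{V}^{(\beta)}$ at limits, and the index $o(\mathcal{V})=\min\{\alpha:\mathcal{V}^{(\alpha)}=\emptyset\}$ (with $o(\mathcal{V})=\infty\ge\omega_1$ if no such ordinal exists). For $C>0$, $\mathcal{V}(M,\mathbb{Q},C)$ is the set of all $(x_f)_{f\in[\mathbb{Q},G]}$, $G\in[\mathbb{N}]^{<\omega}$, $x_f\in M$, with $\frac1C\|f-g\|_\infty\le d(x_f,x_g)\le C\|f-g\|_\infty$ for all $f,g\in[\mathbb{Q},G]$. The Lipschitz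 $c_0$-index is $\mathrm{I}^{\mathrm{Lip}}_{c_0}(M)=\sup\{o(\mathcal{V}(M,\mathbb{Q},C)):C>0\}$. *)

theory Defs
  imports "HOL-Analysis.Analysis"
begin

definition c0 :: "(nat \<Rightarrow> real) set" where
  "c0 = {x. x \<longlonglongrightarrow> 0}"

definition supnorm :: "(nat \<Rightarrow> real) \<Rightarrow> real" where
  "supnorm x = (SUP n. \<bar>x n\<bar>)"

definition c0_bilip_embeds :: "'a::metric_space itself \<Rightarrow> bool" where
  "c0_bilip_embeds _ \<longleftrightarrow>
     (\<exists>(F :: (nat \<Rightarrow> real) \<Rightarrow> 'a) C. C > 0 \<and>
        (\<forall>x\<in>c0. \<forall>y\<in>c0.
           (1 / C) * supnorm (\<lambda>n. x n - y n) \<le> dist (F x) (F y) \<and>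
           dist (F x) (F y) \<le> C * supnorm (\<lambda>n. x n - y n)))"

definition fns :: "real set \<Rightarrow> nat set \<Rightarrow> (nat \<Rightarrow> real) set" where
  "fns E G = {f. (\<forall>n. f n \<in> E) \<and> (\<forall>n. f n \<noteq> 0 \<longrightarrow> n \<in> G)}"

text \<open>A bunch (x_f)_{f \<in> [E,G]} is represented by the pair (G, x) where x is
  extensional: undefined outside [E,G].\<close>
type_synonym 'a bunch = "nat set \<times> ((nat \<Rightarrow> real) \<Rightarrow> 'a)"

definition initial_segment :: "nat set \<Rightarrow> nat set \<Rightarrow> bool" where
  "initial_segment F G \<longleftrightarrow> F \<subseteq> G \<and> (\<forall>m\<in>F. \<forall>n\<in>G. n < m \<longrightarrow> n \<in> F)"

definition bunch_le :: "real set \<Rightarrow> 'a bunch \<Rightarrow> 'a bunch \<Rightarrow> bool" where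
  "bunch_le E p q \<longleftrightarrow> initial_segment (fst p) (fst q) \<and>
      (\<forall>f\<in>fns E (fst p). snd q f = snd p f)"

definition deriv1 :: "real set \<Rightarrow> 'a bunch set \<Rightarrow> 'a bunch set" where
  "deriv1 E S = {p\<in>S. \<exists>q\<in>S. bunch_le E p q \<and> p \<noteq> q}"

text \<open>Transfinite derivatives, indexed by the elements of a well-order r:
  for a in Field r, with \<alpha> the order type of the strict initial segment
  below a, deriv_at E r V a = V^(\<alpha>).  The recursion
  V^(\<alpha>) = V \<inter> \<Inter>_{\<beta><\<alpha>} (V^(\<beta>))^(1)
  gives V^(0) = V, V^(\<beta>+1) = (V^(\<beta>))^(1), and intersections at limits.\<close>
definition deriv_at :: "real set \<Rightarrow> 'i rel \<Rightarrow> 'a bunch set \<Rightarrow> 'i \<Rightarrow> 'a bunch set" where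
  "deriv_at E r V = wfrec (r - Id) (\<lambda>H a. V \<inter> (\<Inter>b\<in>{b. (b, a) \<in> r - Id}. deriv1 E (H b)))"

definition Vlip :: "'a::metric_space itself \<Rightarrow> real \<Rightarrow> 'a bunch set" where
  "Vlip _ C = {(G, x). finite G \<and> (\<forall>f. f \<notin> fns \<rat> G \<longrightarrow> x f = undefined) \<and>
      (\<forall>f\<in>fns \<rat> G. \<forall>g\<in>fns \<rat> G.
         (1 / C) * supnorm (\<lambda>n. f n - g n) \<le> dist (x f) (x g) \<and>
         dist (x f) (x g) \<le> C * supnorm (\<lambda>n. f n - g n))}"

text \<open>I^Lip_{c_0}(M) = sup_C o(V(M,Q,C)) \<ge> \<omega>_1.  Since \<omega>_1 is a limit ordinal,
  this holds iff for every countable ordinal \<alpha> there is C > 0 with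
  o(V(M,Q,C)) > \<alpha>, i.e. V(M,Q,C)^(\<alpha>) \<noteq> {}.  Countable ordinals \<alpha> are exactly the
  order types of strict initial segments {b. b <_r a} for well-orders r on
  subsets of nat and a \<in> Field r.\<close>
definition Lip_c0_index_ge_omega1 :: "'a::metric_space itself \<Rightarrow> bool" where
  "Lip_c0_index_ge_omega1 T \<longleftrightarrow>
     (\<forall>r :: nat rel. Well_order r \<longrightarrow>
        (\<forall>a\<in>Field r. \<exists>C>0. deriv_at \<rat> r (Vlip T C) a \<noteq> {}))"

end

theory Submission
  imports Defs
begin

text \<open>If F embeds c_0 with constant C, the bunches F restricted to [\<rat>,G] form a nonempty
  subset of V(M,\<rat>,C) in which every element has a proper extension, so no derivative ever
  removes them.

  Conversely, fix a dense sequence \<delta> in M and code each bunch by a finite sequence of natural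
  numbers recording its support and \<delta>-approximations of its points; extension of bunches becomes
  proper extension of codes.  An infinite branch of the tree of codes yields maps on finitely
  supported rational vectors that are bi-Lipschitz up to an error tending to 0; their limits
  extend, by completeness, to a bi-Lipschitz embedding of c_0.  So if c_0 does not embed, the tree
  is well founded, its Kleene--Brouwer order is a countable well-order, and ranking bunches by
  their codes shows that the derivative of every V(M,\<rat>,C) at the root of that order is empty.\<close>

section \<open>Derivatives of vines\<close>

lemma deriv_at_eq:
  assumes "Well_order r"
  shows "deriv_at E r V a = V \<inter> (\<Inter>b\<in>{b. (b, a) \<in> r - Id}. deriv1 E (deriv_at E r V b))"
proof -
  have "wf (r - Id)" using assms by (simp add: well_order_on_def)
  then show ?thesis unfolding deriv_at_def by (subst wfrec) (simp_all add: cut_apply)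
qed

lemma deriv_at_subset:
  assumes "Well_order r"
  shows "deriv_at E r V a \<subseteq> V"
  using deriv_at_eq[OF assms] by blast

lemma subset_deriv_at_if_extendable:
  assumes r: "Well_order r" and "W \<subseteq> V"
    and ext: "\<And>p. p \<in> W \<Longrightarrow> \<exists>q\<in>W. bunch_le E p q \<and> p \<noteq> q"
  shows "W \<subseteq> deriv_at E r V a"
proof -
  have "wf (r - Id)" using r by (simp add: well_order_on_def)
  then show ?thesis
  proof (induction a rule: wf_induct_rule)
    case (less a)
    then have "W \<subseteq> deriv1 E (deriv_at E r V b)" if "(b, a) \<in> r - Id" for b
      using ext that unfolding deriv1_def by blast
    then show ?case using \<open>W \<subseteq> V\<close> by (subst deriv_at_eq[OF r]) blast
  qed
qed

lemma deriv_at_rank_not_below: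
  assumes r: "Well_order r"
    and dec: "\<And>p q. p \<in> V \<Longrightarrow> q \<in> V \<Longrightarrow> bunch_le E p q \<Longrightarrow> p \<noteq> q \<Longrightarrow> (\<rho> q, \<rho> p) \<in> r - Id"
  shows "p \<in> deriv_at E r V a \<Longrightarrow> (\<rho> p, a) \<notin> r - Id"
proof -
  have "wf (r - Id)" using r by (simp add: well_order_on_def)
  then show "p \<in> deriv_at E r V a \<Longrightarrow> (\<rho> p, a) \<notin> r - Id"
  proof (induction a arbitrary: p rule: wf_induct_rule)
    case (less a)
    show ?case
    proof
      assume below: "(\<rho> p, a) \<in> r - Id"
      then have "p \<in> deriv1 E (deriv_at E r V (\<rho> p))"
        using less.prems by (subst (asm) deriv_at_eq[OF r]) blast
      then obtain q where q: "q \<in> deriv_at E r V (\<rho> p)" "bunch_le E p q" "p \<noteq> q"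
        and p: "p \<in> deriv_at E r V (\<rho> p)"
        unfolding deriv1_def by blast
      have "(\<rho> q, \<rho> p) \<in> r - Id"
        using dec q(2,3) deriv_at_subset[OF r] p q(1) by blast
      with less.IH[OF below q(1)] show False by blast
    qed
  qed
qed

lemma deriv_at_eq_empty_if_ranks_below:
  assumes r: "Well_order r"
    and dec: "\<And>p q. p \<in> V \<Longrightarrow> q \<in> V \<Longrightarrow> bunch_le E p q \<Longrightarrow> p \<noteq> q \<Longrightarrow> (\<rho> q, \<rho> p) \<in> r - Id"
    and below: "\<And>p. p \<in> V \<Longrightarrow> (\<rho> p, a) \<in> r - Id"
  shows "deriv_at E r V a = {}"
proof -
  have "p \<notin> deriv_at E r V a" for p
  proof
    assume p: "p \<in> deriv_at E r V a"
    have "(\<rho> p, a) \<notin> r - Id" by (rule deriv_at_rank_not_below[OF r dec p])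
    moreover have "p \<in> V" using p deriv_at_subset[OF r] by blast
    ultimately show False using below by blast
  qed
  then show ?thesis by blast
qed

section \<open>The Kleene--Brouwer order\<close>

text \<open>\<open>kb_less xs ys\<close>: xs properly extends ys, or xs is smaller at the first position where
  they differ.\<close>
definition kb_less :: "nat list \<Rightarrow> nat list \<Rightarrow> bool" where
  "kb_less xs ys \<longleftrightarrow> (ys, xs) \<in> lexord {(m, n). n < m}"

lemma kb_less_iff:
  "kb_less xs ys \<longleftrightarrow> (length ys < length xs \<and> take (length ys) xs = ys) \<or>
     (\<exists>j<min (length ys) (length xs). take j ys = take j xs \<and> xs ! j < ys ! j)"
  unfolding kb_less_def lexord_take_index_conv by auto

lemma kb_less_irrefl: "\<not> kb_less xs xs"
  unfolding kb_less_def by (rule lexord_irreflexive) simp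

lemma kb_less_trans: "kb_less xs ys \<Longrightarrow> kb_less ys zs \<Longrightarrow> kb_less xs zs"
  unfolding kb_less_def using lexord_trans[of zs ys "{(m, n). n < m}" xs]
  by (auto simp: trans_def)

lemma kb_less_linear: "kb_less xs ys \<or> xs = ys \<or> kb_less ys xs"
proof -
  have "\<forall>m n. (m, n) \<in> {(m, n). n < m} \<or> m = n \<or> (n, m) \<in> {(m, n :: nat). n < m}"
    by auto
  from lexord_linear[OF this] show ?thesis unfolding kb_less_def by blast
qed

lemma kb_less_Nil: "xs \<noteq> [] \<Longrightarrow> kb_less xs []"
  unfolding kb_less_iff by simp

lemma kb_less_if_extension: "length ys < length xs \<Longrightarrow> take (length ys) xs = ys \<Longrightarrow> kb_less xs ys"
  unfolding kb_less_iff by simp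

lemma nth_eq_if_take_eq: "take i xs = take i ys \<Longrightarrow> j < i \<Longrightarrow> xs ! j = ys ! j"
  using nth_take[of j i xs] nth_take[of j i ys] by simp

lemma kb_less_next_entry:
  assumes "kb_less xs ys" "take i xs = take i ys" "i \<le> length xs" "i \<le> length ys"
  shows "i < length xs \<and> (i < length ys \<longrightarrow> xs ! i \<le> ys ! i)"
  using assms(1) unfolding kb_less_iff
proof
  assume ext: "length ys < length xs \<and> take (length ys) xs = ys"
  have "xs ! i = ys ! i" if "i < length ys"
    using ext nth_take[OF that, of xs] by simp
  then show ?thesis using ext assms(4) by auto
next
  assume "\<exists>j<min (length ys) (length xs). take j ys = take j xs \<and> xs ! j < ys ! j"
  then obtain j where j: "j < length ys" "j < length xs" "take j ys = take j xs" "xs ! j < ys ! j"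
    by auto
  have "\<not> j < i" using nth_eq_if_take_eq[OF assms(2), of j] j by auto
  moreover have "xs ! i = ys ! i" if "i < j"
    using nth_eq_if_take_eq[OF j(3) that] j that by (simp add: less_trans)
  ultimately show ?thesis using j by (cases "i = j") auto
qed

lemma eventually_const_if_antimono_from:
  fixes g :: "nat \<Rightarrow> nat"
  assumes dec: "\<And>k. K \<le> k \<Longrightarrow> g (Suc k) \<le> g k"
  shows "\<exists>K'\<ge>K. \<forall>k\<ge>K'. g k = g K'"
proof -
  define v where "v = (LEAST v. \<exists>k\<ge>K. g k = v)"
  obtain K' where K': "K \<le> K'" "g K' = v"
    using LeastI_ex[of "\<lambda>v. \<exists>k\<ge>K. g k = v"] unfolding v_def by blast
  have "g k = g K'" if "K' \<le> k" for k
  proof (rule antisym)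
    show "g k \<le> g K'" using that
    proof (induction k rule: dec_induct)
      case (step k)
      then show ?case using dec[of k] K'(1) by simp
    qed simp
    show "g K' \<le> g k" unfolding K'(2) v_def using K'(1) that by (intro Least_le exI[of _ k]) auto
  qed
  then show ?thesis using K'(1) by blast
qed

lemma kb_descending_stabilizes:
  assumes desc: "\<And>k. kb_less (s (Suc k)) (s k)"
  shows "\<exists>K. \<forall>k\<ge>K. i \<le> length (s k) \<and> take i (s k) = take i (s K)"
proof (induction i)
  case (Suc i)
  then obtain K where K: "\<And>k. K \<le> k \<Longrightarrow> i \<le> length (s k) \<and> take i (s k) = take i (s K)"
    by blast
  have next_entry: "i < length (s (Suc k)) \<and> (i < length (s k) \<longrightarrow> s (Suc k) ! i \<le> s k ! i)"
    if "K \<le> k" for k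
    using kb_less_next_entry[OF desc[of k]] K[of k] K[of "Suc k"] that by simp
  have long: "i < length (s k)" if "Suc K \<le> k" for k
    using next_entry[of "k - 1"] that by simp
  have "s (Suc k) ! i \<le> s k ! i" if "Suc K \<le> k" for k
    using next_entry[of k] long[of k] that by simp
  from eventually_const_if_antimono_from[of "Suc K" "\<lambda>k. s k ! i", OF this]
  obtain K' where K': "Suc K \<le> K'" "\<And>k. K' \<le> k \<Longrightarrow> s k ! i = s K' ! i"
    by auto
  have "Suc i \<le> length (s k) \<and> take (Suc i) (s k) = take (Suc i) (s K')" if "K' \<le> k" for k
    using long[of k] long[of K'] K[of k] K[of K'] K'(2)[OF that] K'(1) that
    by (simp add: take_Suc_conv_app_nth)
  then show ?case by blast
qed simp

lemma kb_descending_branch: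
  assumes desc: "\<And>k. kb_less (s (Suc k)) (s k)"
  shows "\<exists>b. \<forall>i. \<exists>k. i \<le> length (s k) \<and> take i (s k) = map b [0..<i]"
proof -
  obtain K where K: "\<And>i k. K i \<le> k \<Longrightarrow> i \<le> length (s k) \<and> take i (s k) = take i (s (K i))"
    using kb_descending_stabilizes[of s, OF desc] by metis
  define b where "b j = s (K (Suc j)) ! j" for j
  have "i \<le> length (s k) \<and> take i (s k) = map b [0..<i]" if "\<forall>j<i. K (Suc j) \<le> k" for i k
    using that
  proof (induction i)
    case (Suc i)
    have "K (Suc i) \<le> k" using Suc.prems by simp
    from K[OF this] have "Suc i \<le> length (s k)" "take (Suc i) (s k) = take (Suc i) (s (K (Suc i)))"
      by auto
    moreover have "Suc i \<le> length (s (K (Suc i)))" using K[of "Suc i" "K (Suc i)"] by simp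
    ultimately have "Suc i \<le> length (s k)" "s k ! i = b i"
      unfolding b_def by (auto intro: nth_eq_if_take_eq[of "Suc i"])
    moreover have "take i (s k) = map b [0..<i]" using Suc by simp
    ultimately show ?case by (simp add: take_Suc_conv_app_nth)
  qed simp
  moreover have "\<forall>j<i. K (Suc j) \<le> (\<Sum>j<i. K (Suc j))" for i
    by (auto intro: member_le_sum)
  ultimately show ?thesis by blast
qed

definition kb_order :: "nat list set \<Rightarrow> nat list rel" where
  "kb_order A = {(xs, ys). xs \<in> A \<and> ys \<in> A \<and> (xs = ys \<or> kb_less xs ys)}"

lemma Field_kb_order: "Field (kb_order A) = A"
  unfolding kb_order_def Field_def by auto

lemma Well_order_kb_order:
  assumes "\<nexists>s. \<forall>k. s k \<in> A \<and> kb_less (s (Suc k)) (s k)"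
  shows "Well_order (kb_order A)"
proof -
  have "Linear_order (kb_order A)"
    unfolding linear_order_on_def partial_order_on_def preorder_on_def Field_kb_order
      refl_on_def trans_def antisym_def total_on_def
    using kb_less_trans kb_less_irrefl kb_less_linear by (auto simp: kb_order_def) blast
  moreover have "wf (kb_order A - Id)"
    unfolding wf_iff_no_infinite_down_chain using assms by (auto simp: kb_order_def)
  ultimately show ?thesis unfolding well_order_on_def by blast
qed

text \<open>Transported to nat, the index type of the derivatives in the definition of the index.\<close>
definition kb_order_nat :: "nat list set \<Rightarrow> nat rel" where
  "kb_order_nat A = dir_image (kb_order A) to_nat"

lemma Well_order_kb_order_nat:
  "\<nexists>s. \<forall>k. s k \<in> A \<and> kb_less (s (Suc k)) (s k) \<Longrightarrow> Well_order (kb_order_nat A)"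
  unfolding kb_order_nat_def
  by (rule Well_order_dir_image[OF Well_order_kb_order]) (auto simp: inj_on_def)

lemma kb_order_nat_strictI:
  "xs \<in> A \<Longrightarrow> ys \<in> A \<Longrightarrow> kb_less xs ys \<Longrightarrow> (to_nat xs, to_nat ys) \<in> kb_order_nat A - Id"
  unfolding kb_order_nat_def dir_image_def kb_order_def using kb_less_irrefl by auto

lemma to_nat_in_Field_kb_order_nat: "xs \<in> A \<Longrightarrow> to_nat xs \<in> Field (kb_order_nat A)"
  unfolding kb_order_nat_def dir_image_def kb_order_def Field_def by blast

section \<open>The sup norm and rational approximation in c_0\<close>

lemma c0_diff: "x \<in> c0 \<Longrightarrow> y \<in> c0 \<Longrightarrow> (\<lambda>n. x n - y n) \<in> c0"
  unfolding c0_def using tendsto_diff by fastforce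

lemma Bseq_if_c0: "x \<in> c0 \<Longrightarrow> Bseq x"
  unfolding c0_def using convergent_imp_Bseq convergentI by blast

lemma supnorm_least: "(\<And>k. \<bar>u k\<bar> \<le> B) \<Longrightarrow> supnorm u \<le> B"
  unfolding supnorm_def by (rule cSUP_least) auto

lemma abs_le_supnorm: "Bseq u \<Longrightarrow> \<bar>u k\<bar> \<le> supnorm u"
  unfolding supnorm_def using Bseq_bdd_above'[of u] by (auto intro: cSUP_upper)

lemma supnorm_nonneg: "Bseq u \<Longrightarrow> 0 \<le> supnorm u"
  using abs_le_supnorm[of u 0] by linarith

lemma abs_supnorm_diff_le:
  assumes u: "Bseq u" and v: "Bseq v" and uv: "Bseq (\<lambda>k. u k - v k)"
  shows "\<bar>supnorm u - supnorm v\<bar> \<le> supnorm (\<lambda>k. u k - v k)"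
proof -
  have "supnorm u \<le> supnorm v + supnorm (\<lambda>k. u k - v k)"
  proof (rule supnorm_least)
    fix k show "\<bar>u k\<bar> \<le> supnorm v + supnorm (\<lambda>k. u k - v k)"
      using abs_le_supnorm[OF v, of k] abs_le_supnorm[OF uv, of k] by linarith
  qed
  moreover have "supnorm v \<le> supnorm u + supnorm (\<lambda>k. u k - v k)"
  proof (rule supnorm_least)
    fix k show "\<bar>v k\<bar> \<le> supnorm u + supnorm (\<lambda>k. u k - v k)"
      using abs_le_supnorm[OF u, of k] abs_le_supnorm[OF uv, of k] by linarith
  qed
  ultimately show ?thesis by linarith
qed

lemma supnorm_le_supnorm:
  assumes "Bseq v" "\<And>k. u k \<noteq> 0 \<Longrightarrow> \<exists>j. \<bar>u k\<bar> \<le> \<bar>v j\<bar>"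
  shows "supnorm u \<le> supnorm v"
proof (rule supnorm_least)
  fix k show "\<bar>u k\<bar> \<le> supnorm v"
    using assms abs_le_supnorm[OF assms(1)] supnorm_nonneg[OF assms(1)]
    by (cases "u k = 0") (auto intro: order_trans)
qed

definition rat_vec :: "rat list \<Rightarrow> nat \<Rightarrow> real" where
  "rat_vec c k = (if k < length c then of_rat (c ! k) else 0)"

lemma rat_vec_in_c0: "rat_vec c \<in> c0"
proof -
  have "eventually (\<lambda>k. rat_vec c k = 0) sequentially"
    unfolding rat_vec_def by (rule eventually_sequentiallyI[of "length c"]) auto
  then show ?thesis unfolding c0_def by (simp add: tendsto_eventually)
qed

lemma c0_approx_rat_vec:
  assumes "z \<in> c0" "e > 0"
  shows "\<exists>c. \<forall>k. \<bar>z k - rat_vec c k\<bar> \<le> e"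
proof -
  obtain N where N: "\<And>k. N \<le> k \<Longrightarrow> \<bar>z k\<bar> < e"
    using assms unfolding c0_def LIMSEQ_iff by auto
  have "\<forall>k. \<exists>q. z k < of_rat q \<and> of_rat q < z k + e" using of_rat_dense assms(2) by simp
  then obtain q where q: "\<And>k. z k < of_rat (q k) \<and> of_rat (q k) < z k + e" by metis
  have "\<bar>z k - rat_vec (map q [0..<N]) k\<bar> \<le> e" for k
    using q[of k] N[of k] unfolding rat_vec_def by (cases "k < N") auto
  then show ?thesis by blast
qed

definition rat_approx :: "(nat \<Rightarrow> real) \<Rightarrow> nat \<Rightarrow> rat list" where
  "rat_approx z m = (SOME c. \<forall>k. \<bar>z k - rat_vec c k\<bar> \<le> inverse (real (Suc m)))"

lemma rat_approx: "z \<in> c0 \<Longrightarrow> \<bar>z k - rat_vec (rat_approx z m) k\<bar> \<le> inverse (real (Suc m))"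
  unfolding rat_approx_def using someI_ex[OF c0_approx_rat_vec[of z "inverse (real (Suc m))"]] by simp

lemma supnorm_rat_approx:
  assumes z: "z \<in> c0" and z': "z' \<in> c0"
  shows "\<bar>supnorm (\<lambda>k. rat_vec (rat_approx z m) k - rat_vec (rat_approx z' m') k)
           - supnorm (\<lambda>k. z k - z' k)\<bar> \<le> inverse (real (Suc m)) + inverse (real (Suc m'))"
proof -
  let ?u = "\<lambda>k. rat_vec (rat_approx z m) k - rat_vec (rat_approx z' m') k"
  let ?v = "\<lambda>k. z k - z' k"
  have "?u \<in> c0" "?v \<in> c0" "(\<lambda>k. ?u k - ?v k) \<in> c0"
    using c0_diff rat_vec_in_c0 z z' by blast+
  then have "\<bar>supnorm ?u - supnorm ?v\<bar> \<le> supnorm (\<lambda>k. ?u k - ?v k)"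
    by (intro abs_supnorm_diff_le Bseq_if_c0)
  also have "\<dots> \<le> inverse (real (Suc m)) + inverse (real (Suc m'))"
  proof (rule supnorm_least)
    fix k show "\<bar>?u k - ?v k\<bar> \<le> inverse (real (Suc m)) + inverse (real (Suc m'))"
      using rat_approx[OF z, of k m] rat_approx[OF z', of k m'] by linarith
  qed
  finally show ?thesis .
qed

lemma tendsto_inverse_Suc_double: "(\<lambda>m. inverse (real (Suc m)) + inverse (real (Suc m))) \<longlonglongrightarrow> 0"
  using tendsto_add[OF LIMSEQ_inverse_real_of_nat LIMSEQ_inverse_real_of_nat] by simp

lemma supnorm_rat_approx_tendsto:
  assumes "z \<in> c0" "z' \<in> c0"
  shows "(\<lambda>m. supnorm (\<lambda>k. rat_vec (rat_approx z m) k - rat_vec (rat_approx z' m) k))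
           \<longlonglongrightarrow> supnorm (\<lambda>k. z k - z' k)"
proof (rule tendsto_dist_iff[THEN iffD2],
    rule Lim_null_comparison[OF always_eventually tendsto_inverse_Suc_double], rule allI)
  fix m show "norm (dist (supnorm (\<lambda>k. rat_vec (rat_approx z m) k - rat_vec (rat_approx z' m) k))
      (supnorm (\<lambda>k. z k - z' k))) \<le> inverse (real (Suc m)) + inverse (real (Suc m))"
    using supnorm_rat_approx[OF assms, of m m] unfolding dist_real_def real_norm_def abs_abs .
qed

lemma Cauchy_if_dist_le_null:
  assumes e: "e \<longlonglongrightarrow> 0" and le: "\<And>m m'. M \<le> m \<Longrightarrow> m \<le> m' \<Longrightarrow> dist (X m) (X m') \<le> e m"
  shows "Cauchy X"
  unfolding Cauchy_altdef2
proof (intro allI impI)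
  fix \<epsilon> :: real assume "\<epsilon> > 0"
  then obtain N where N: "\<And>m. N \<le> m \<Longrightarrow> \<bar>e m\<bar> < \<epsilon>"
    using e unfolding LIMSEQ_iff by auto
  have "dist (X n) (X (max M N)) < \<epsilon>" if "max M N \<le> n" for n
    using le[of "max M N" n] N[of "max M N"] that by (simp add: dist_commute)
  then show "\<exists>N. \<forall>n\<ge>N. dist (X n) (X N) < \<epsilon>" by blast
qed

lemma Cauchy_if_common_approximation:
  assumes e: "e \<longlonglongrightarrow> 0" and approx: "\<And>i i'. M \<le> i \<Longrightarrow> i \<le> i' \<Longrightarrow> dist (z i) (X i') < e i"
  shows "Cauchy X"
proof (rule Cauchy_if_dist_le_null[of "\<lambda>i. e i + e i" M])
  show "(\<lambda>i. e i + e i) \<longlonglongrightarrow> 0" using tendsto_add[OF e e] by simp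
  fix i i' assume "M \<le> i" "i \<le> i'"
  then have "dist (z i) (X i) < e i" "dist (z i) (X i') < e i" using approx by auto
  then show "dist (X i) (X i') \<le> e i + e i" using dist_triangle3[of "X i" "X i'" "z i"] by linarith
qed

lemma bilip_bounds_limit:
  assumes "X \<longlonglongrightarrow> x" "X' \<longlonglongrightarrow> x'" "s \<longlonglongrightarrow> t"
    and "eventually (\<lambda>m. (1 / C) * s m \<le> dist (X m) (X' m) \<and> dist (X m) (X' m) \<le> C * s m) sequentially"
  shows "(1 / C) * t \<le> dist x x' \<and> dist x x' \<le> C * t"
proof -
  have d: "(\<lambda>m. dist (X m) (X' m)) \<longlonglongrightarrow> dist x x'"
    using assms(1,2) by (rule tendsto_dist)
  have "(1 / C) * t \<le> dist x x'"
    using assms(4) by (intro tendsto_le[OF _ d tendsto_mult_left[OF assms(3)]]) (auto elim: eventually_mono)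
  moreover have "dist x x' \<le> C * t"
    using assms(4) by (intro tendsto_le[OF _ tendsto_mult_left[OF assms(3)] d]) (auto elim: eventually_mono)
  ultimately show ?thesis ..
qed

lemma c0_bilip_embeds_if_rat_vec_bilip:
  fixes Y :: "rat list \<Rightarrow> 'a::complete_space"
  assumes C: "C > 0"
    and Y: "\<And>c c'. (1 / C) * supnorm (\<lambda>k. rat_vec c k - rat_vec c' k) \<le> dist (Y c) (Y c') \<and>
                   dist (Y c) (Y c') \<le> C * supnorm (\<lambda>k. rat_vec c k - rat_vec c' k)"
  shows "c0_bilip_embeds TYPE('a)"
proof -
  have "Cauchy (\<lambda>m. Y (rat_approx z m))" if z: "z \<in> c0" for z
  proof (rule Cauchy_if_dist_le_null[OF tendsto_mult_right_zero[OF tendsto_inverse_Suc_double, of C]])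
    fix m m' :: nat assume "m \<le> m'"
    have "supnorm (\<lambda>k. rat_vec (rat_approx z m) k - rat_vec (rat_approx z m') k)
        - supnorm (\<lambda>k. z k - z k) \<le> inverse (real (Suc m)) + inverse (real (Suc m'))"
      using supnorm_rat_approx[OF z z, of m m'] by (rule abs_le_D1)
    moreover have "supnorm (\<lambda>k. z k - z k) \<le> 0" by (rule supnorm_least) simp
    moreover have "inverse (real (Suc m')) \<le> inverse (real (Suc m))"
      using \<open>m \<le> m'\<close> by (simp add: le_imp_inverse_le)
    ultimately have "supnorm (\<lambda>k. rat_vec (rat_approx z m) k - rat_vec (rat_approx z m') k)
        \<le> inverse (real (Suc m)) + inverse (real (Suc m))"
      by linarith
    then have "C * supnorm (\<lambda>k. rat_vec (rat_approx z m) k - rat_vec (rat_approx z m') k)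
        \<le> C * (inverse (real (Suc m)) + inverse (real (Suc m)))"
      using C by (intro mult_left_mono) auto
    then show "dist (Y (rat_approx z m)) (Y (rat_approx z m'))
        \<le> C * (inverse (real (Suc m)) + inverse (real (Suc m)))"
      using Y[of "rat_approx z m" "rat_approx z m'"] by linarith
  qed
  then have lim: "(\<lambda>m. Y (rat_approx z m)) \<longlonglongrightarrow> lim (\<lambda>m. Y (rat_approx z m))" if "z \<in> c0" for z
    using that by (intro convergent_LIMSEQ_iff[THEN iffD1, OF Cauchy_convergent])
  have bilip: "(1 / C) * supnorm (\<lambda>k. z k - z' k) \<le> dist (lim (\<lambda>m. Y (rat_approx z m))) (lim (\<lambda>m. Y (rat_approx z' m))) \<and>
        dist (lim (\<lambda>m. Y (rat_approx z m))) (lim (\<lambda>m. Y (rat_approx z' m))) \<le> C * supnorm (\<lambda>k. z k - z' k)"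
    if "z \<in> c0" "z' \<in> c0" for z z'
    using Y by (intro bilip_bounds_limit[OF lim lim supnorm_rat_approx_tendsto] always_eventually allI that)
  show ?thesis
    unfolding c0_bilip_embeds_def
    by (intro exI[of _ "\<lambda>z. lim (\<lambda>m. Y (rat_approx z m))"] exI[of _ C] conjI[OF C] ballI bilip)
qed

section \<open>Bunches and their codes\<close>

lemma fns_subset_c0:
  assumes "finite G"
  shows "fns E G \<subseteq> c0"
proof
  fix f assume f: "f \<in> fns E G"
  obtain m where m: "\<And>n. n \<in> G \<Longrightarrow> n < m"
    using assms by (auto simp: finite_nat_set_iff_bounded)
  have "eventually (\<lambda>n. f n = 0) sequentially"
  proof (rule eventually_sequentiallyI)
    fix n assume "m \<le> n"
    then show "f n = 0" using f m by (force simp: fns_def)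
  qed
  then show "f \<in> c0" unfolding c0_def by (simp add: tendsto_eventually)
qed

lemma initial_segment_insert_Max:
  "finite G \<Longrightarrow> initial_segment G (insert (Suc (Max (insert 0 G))) G)"
  unfolding initial_segment_def using Max_ge[of "insert 0 G"] by fastforce

lemma fns_mono: "G \<subseteq> G' \<Longrightarrow> fns E G \<subseteq> fns E G'"
  unfolding fns_def by auto

lemma Vlip_finite: "p \<in> Vlip T C \<Longrightarrow> finite (fst p)"
  unfolding Vlip_def by auto

lemma Vlip_undefined: "p \<in> Vlip T C \<Longrightarrow> f \<notin> fns \<rat> (fst p) \<Longrightarrow> snd p f = undefined"
  unfolding Vlip_def by auto

lemma Vlip_bilip:
  assumes "p \<in> Vlip (T :: 'a::metric_space itself) C" "f \<in> fns \<rat> (fst p)" "g \<in> fns \<rat> (fst p)"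
  shows "(1 / C) * supnorm (\<lambda>n. f n - g n) \<le> dist (snd p f) (snd p g) \<and>
         dist (snd p f) (snd p g) \<le> C * supnorm (\<lambda>n. f n - g n)"
  using assms unfolding Vlip_def by auto

lemma Vlip_mono:
  assumes "0 < C" "C \<le> C'"
  shows "Vlip T C \<subseteq> Vlip T C'"
proof
  fix p assume p: "p \<in> Vlip T C"
  have "(1 / C') * supnorm (\<lambda>n. f n - g n) \<le> dist (snd p f) (snd p g) \<and>
        dist (snd p f) (snd p g) \<le> C' * supnorm (\<lambda>n. f n - g n)"
    if f: "f \<in> fns \<rat> (fst p)" and g: "g \<in> fns \<rat> (fst p)" for f g
  proof -
    have "0 \<le> supnorm (\<lambda>n. f n - g n)"
      using f g fns_subset_c0[OF Vlip_finite[OF p]] by (intro supnorm_nonneg Bseq_if_c0 c0_diff) auto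
    moreover have "1 / C' \<le> 1 / C" using assms by (simp add: frac_le)
    ultimately have "(1 / C') * supnorm (\<lambda>n. f n - g n) \<le> (1 / C) * supnorm (\<lambda>n. f n - g n)"
      and "C * supnorm (\<lambda>n. f n - g n) \<le> C' * supnorm (\<lambda>n. f n - g n)"
      using assms(2) by (metis mult_right_mono)+
    then show ?thesis using Vlip_bilip[OF p f g] by linarith
  qed
  then show "p \<in> Vlip T C'"
    using p Vlip_finite[OF p] Vlip_undefined[OF p] unfolding Vlip_def by (cases p) auto
qed

fun place :: "nat list \<Rightarrow> rat list \<Rightarrow> nat \<Rightarrow> real" where
  "place (s # S) (a # c) = (place S c)(s := of_rat a)"
| "place _ _ = (\<lambda>_. 0)"

lemma place_eq_0: "k \<notin> set S \<Longrightarrow> place S c k = 0"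
  by (induction S c rule: place.induct) auto

lemma place_in_fns: "place S c \<in> fns \<rat> (set S)"
proof -
  have "(\<forall>n. place S c n \<in> \<rat>) \<and> (\<forall>n. place S c n \<noteq> 0 \<longrightarrow> n \<in> set S)"
    by (induction S c rule: place.induct) auto
  then show ?thesis unfolding fns_def by auto
qed

lemma place_take: "place S c = place (take (length c) S) c"
  by (induction S c rule: place.induct) auto

lemma place_nth: "distinct S \<Longrightarrow> j < length S \<Longrightarrow> place S c (S ! j) = rat_vec c j"
proof (induction S c arbitrary: j rule: place.induct)
  case (1 s S a c)
  then show ?case by (cases j) (auto simp: rat_vec_def)
qed (auto simp: rat_vec_def)

lemma supnorm_place:
  assumes "distinct S" "length c \<le> length S" "length c' \<le> length S"
  shows "supnorm (\<lambda>k. place S c k - place S c' k) = supnorm (\<lambda>k. rat_vec c k - rat_vec c' k)"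
proof (rule antisym; rule supnorm_le_supnorm)
  show "Bseq (\<lambda>k. rat_vec c k - rat_vec c' k)" "Bseq (\<lambda>k. place S c k - place S c' k)"
    using rat_vec_in_c0 place_in_fns fns_subset_c0[of "set S"]
    by (blast intro: Bseq_if_c0 c0_diff)+
  show "\<exists>j. \<bar>place S c k - place S c' k\<bar> \<le> \<bar>rat_vec c j - rat_vec c' j\<bar>"
    if "place S c k - place S c' k \<noteq> 0" for k
  proof -
    have "k \<in> set S" using that place_eq_0 by force
    then obtain j where "j < length S" "k = S ! j" by (auto simp: in_set_conv_nth)
    then show ?thesis using place_nth[OF assms(1)] by auto
  qed
  show "\<exists>j. \<bar>rat_vec c k - rat_vec c' k\<bar> \<le> \<bar>place S c j - place S c' j\<bar>"
    if "rat_vec c k - rat_vec c' k \<noteq> 0" for k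
  proof -
    have "k < length S" using that assms(2,3) by (auto simp: rat_vec_def split: if_splits)
    then show ?thesis using place_nth[OF assms(1), of k] by (intro exI[of _ "S ! k"]) simp
  qed
qed

lemma Vlip_place_bilip:
  assumes p: "p \<in> Vlip (T :: 'a::metric_space itself) C"
    and S: "distinct S" "set S \<subseteq> fst p" "length c \<le> length S" "length c' \<le> length S"
  shows "(1 / C) * supnorm (\<lambda>k. rat_vec c k - rat_vec c' k) \<le> dist (snd p (place S c)) (snd p (place S c')) \<and>
         dist (snd p (place S c)) (snd p (place S c')) \<le> C * supnorm (\<lambda>k. rat_vec c k - rat_vec c' k)"
proof -
  have "place S c \<in> fns \<rat> (fst p)" "place S c' \<in> fns \<rat> (fst p)"
    using place_in_fns fns_mono S(2) by blast+
  from Vlip_bilip[OF p this] show ?thesis unfolding supnorm_place[OF S(1,3,4)] .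
qed

definition approx_index :: "(nat \<Rightarrow> 'a::metric_space) \<Rightarrow> nat \<Rightarrow> 'a \<Rightarrow> nat" where
  "approx_index \<delta> i y = (LEAST m. dist (\<delta> m) y < inverse (real (Suc i)))"

lemma dist_approx_index:
  assumes "\<And>y e. e > 0 \<Longrightarrow> \<exists>m. dist (\<delta> m) y < e"
  shows "dist (\<delta> (approx_index \<delta> i y)) y < inverse (real (Suc i))"
  unfolding approx_index_def by (rule LeastI_ex) (rule assms, simp)

text \<open>Entry i of the code of a bunch (x_f)_{f \<in> [\<rat>,G]} records the i-th element of G and,
  for the first i+1 rational vectors (enumerated by \<open>from_nat\<close>) placed on the first i+1
  elements of G, the index of a point of \<delta> within 1/(i+1) of the corresponding x_f.\<close>
definition code_entry :: "(nat \<Rightarrow> 'a::metric_space) \<Rightarrow> nat list \<Rightarrow> ((nat \<Rightarrow> real) \<Rightarrow> 'a) \<Rightarrow> nat \<Rightarrow> nat" where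
  "code_entry \<delta> S x i = to_nat (S ! i,
     map (\<lambda>j. approx_index \<delta> i (x (place (take (Suc i) S) (from_nat j)))) [0..<Suc i])"

definition code :: "(nat \<Rightarrow> 'a::metric_space) \<Rightarrow> 'a bunch \<Rightarrow> nat list" where
  "code \<delta> p = map (code_entry \<delta> (sorted_list_of_set (fst p)) (snd p)) [0..<card (fst p)]"

lemma length_code: "length (code \<delta> p) = card (fst p)"
  unfolding code_def by simp

lemma sorted_list_of_set_initial_segment:
  assumes G: "finite G" and FG: "initial_segment F G"
  shows "sorted_list_of_set F = take (card F) (sorted_list_of_set G)"
proof -
  have sub: "F \<subseteq> G" and down: "\<And>m n. m \<in> F \<Longrightarrow> n \<in> G - F \<Longrightarrow> m < n"
    using FG unfolding initial_segment_def by (metis DiffE linorder_neqE_nat)+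
  have F: "finite F" using finite_subset[OF sub G] .
  define L where "L = sorted_list_of_set F @ sorted_list_of_set (G - F)"
  have "sorted_wrt (<) L"
    unfolding L_def sorted_wrt_append using F G down by simp
  moreover have "set L = G" "length L = card G"
    unfolding L_def using F G sub by (auto simp: card_Diff_subset card_mono)
  ultimately have "sorted_list_of_set G = L" using sorted_list_of_set_unique[OF G] by blast
  then show ?thesis unfolding L_def by simp
qed

lemma code_extends:
  assumes p: "p \<in> Vlip TYPE('a::metric_space) C" and q: "q \<in> Vlip TYPE('a) C'"
    and le: "bunch_le \<rat> p q" and "p \<noteq> q"
  shows "length (code \<delta> p) < length (code \<delta> q) \<and> take (length (code \<delta> p)) (code \<delta> q) = code \<delta> p"
proof -
  obtain F x G y where pq: "p = (F, x)" "q = (G, y)" by (cases p, cases q)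
  have F: "finite F" and G: "finite G" using Vlip_finite[OF p] Vlip_finite[OF q] pq by auto
  have seg: "initial_segment F G" and agree: "\<And>f. f \<in> fns \<rat> F \<Longrightarrow> y f = x f"
    using le pq unfolding bunch_le_def by auto
  have FG: "F \<subseteq> G" using seg unfolding initial_segment_def by auto
  have sl: "sorted_list_of_set F = take (card F) (sorted_list_of_set G)"
    using sorted_list_of_set_initial_segment[OF G seg] .
  have "code_entry \<delta> (sorted_list_of_set F) x i = code_entry \<delta> (sorted_list_of_set G) y i"
    if i: "i < card F" for i
  proof -
    have take: "take (Suc i) (sorted_list_of_set F) = take (Suc i) (sorted_list_of_set G)"
      using sl i by (simp add: min_def)
    have nth: "sorted_list_of_set F ! i = sorted_list_of_set G ! i"
      using nth_eq_if_take_eq[OF take lessI] .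
    have "set (take (Suc i) (sorted_list_of_set F)) \<subseteq> F"
      using F set_take_subset by fastforce
    then have "place (take (Suc i) (sorted_list_of_set F)) c \<in> fns \<rat> F" for c
      using place_in_fns fns_mono by blast
    then have "x (place (take (Suc i) (sorted_list_of_set G)) c) = y (place (take (Suc i) (sorted_list_of_set G)) c)" for c
      using agree take by simp
    then show ?thesis
      unfolding code_entry_def take nth by simp
  qed
  moreover have "card F < card G"
  proof (rule psubset_card_mono[OF G])
    have "x = y" if "F = G"
    proof
      fix f show "x f = y f"
        using agree[of f] Vlip_undefined[OF p, of f] Vlip_undefined[OF q, of f] pq that
        by (cases "f \<in> fns \<rat> F") auto
    qed
    then show "F \<subset> G" using FG \<open>p \<noteq> q\<close> pq by blast
  qed
  ultimately show ?thesis
    unfolding code_def pq by (auto intro: nth_equalityI)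
qed

lemma code_prefix_decode:
  assumes dense: "\<And>y e. e > 0 \<Longrightarrow> \<exists>m. dist (\<delta> m) y < e"
    and len: "i < length (code \<delta> p)" and pre: "take (Suc i) (code \<delta> p) = map b [0..<Suc i]"
  shows "take (Suc i) (sorted_list_of_set (fst p)) = map (\<lambda>k. fst (from_nat (b k) :: nat \<times> nat list)) [0..<Suc i]"
    and "j \<le> i \<Longrightarrow> dist (\<delta> (snd (from_nat (b i) :: nat \<times> nat list) ! j))
            (snd p (place (take (Suc i) (sorted_list_of_set (fst p))) (from_nat j))) < inverse (real (Suc i))"
proof -
  have entry: "from_nat (b k) = (sorted_list_of_set (fst p) ! k,
      map (\<lambda>j. approx_index \<delta> k (snd p (place (take (Suc k) (sorted_list_of_set (fst p))) (from_nat j)))) [0..<Suc k])"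
    if "k \<le> i" for k
  proof -
    have "b k = take (Suc i) (code \<delta> p) ! k" using pre that by (simp del: upt_Suc)
    also have "\<dots> = code_entry \<delta> (sorted_list_of_set (fst p)) (snd p) k"
      using len that unfolding code_def by simp
    finally show ?thesis unfolding code_entry_def by simp
  qed
  show "take (Suc i) (sorted_list_of_set (fst p)) = map (\<lambda>k. fst (from_nat (b k) :: nat \<times> nat list)) [0..<Suc i]"
    using len entry unfolding length_code by (intro nth_equalityI) (auto simp del: upt_Suc)
  show "dist (\<delta> (snd (from_nat (b i) :: nat \<times> nat list) ! j))
      (snd p (place (take (Suc i) (sorted_list_of_set (fst p))) (from_nat j))) < inverse (real (Suc i))"
    if "j \<le> i"
    using entry[of i] that dist_approx_index[OF dense] by (simp del: upt_Suc)
qed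

lemma obtain_branch_witnesses:
  fixes f :: "'b \<Rightarrow> 'c list"
  assumes "\<And>i. \<exists>p \<in> V. i \<le> length (f p) \<and> take i (f p) = map b [0..<i]"
  obtains P where "\<And>i. P i \<in> V"
    and "\<And>i i'. i \<le> i' \<Longrightarrow> i < length (f (P i')) \<and> take (Suc i) (f (P i')) = map b [0..<Suc i]"
proof -
  have "\<forall>i. \<exists>p. p \<in> V \<and> Suc i \<le> length (f p) \<and> take (Suc i) (f p) = map b [0..<Suc i]"
    using assms by blast
  then obtain P where P: "\<And>i. P i \<in> V"
    and P_prefix: "\<And>i. Suc i \<le> length (f (P i)) \<and> take (Suc i) (f (P i)) = map b [0..<Suc i]"
    by metis
  have "i < length (f (P i')) \<and> take (Suc i) (f (P i')) = map b [0..<Suc i]" if "i \<le> i'" for i i'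
  proof -
    have "take (Suc i) (f (P i')) = take (Suc i) (map b [0..<Suc i'])"
      using P_prefix[of i'] that by (metis Suc_le_mono min.absorb1 take_take)
    then show ?thesis using P_prefix[of i'] that by (simp add: take_map min_def del: upt_Suc)
  qed
  with P show ?thesis by (rule that)
qed

lemma c0_bilip_embeds_if_code_branch:
  fixes \<delta> :: "nat \<Rightarrow> 'a::complete_space"
  assumes dense: "\<And>y e. e > 0 \<Longrightarrow> \<exists>m. dist (\<delta> m) y < e"
    and C: "C > 0"
    and branch: "\<And>i. \<exists>p \<in> Vlip TYPE('a) C. i \<le> length (code \<delta> p) \<and> take i (code \<delta> p) = map b [0..<i]"
  shows "c0_bilip_embeds TYPE('a)"
proof -
  obtain P where P: "\<And>i. P i \<in> Vlip TYPE('a) C"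
    and P_prefix: "\<And>i i'. i \<le> i' \<Longrightarrow> i < length (code \<delta> (P i')) \<and> take (Suc i) (code \<delta> (P i')) = map b [0..<Suc i]"
    using obtain_branch_witnesses[OF branch] by blast
  define N where "N k = fst (from_nat (b k) :: nat \<times> nat list)" for k
  define x where "x i c = snd (P i) (place (map N [0..<length c]) c)" for i c
  have coords: "take (Suc i) (sorted_list_of_set (fst (P i'))) = map N [0..<Suc i]" if "i \<le> i'" for i i'
    using code_prefix_decode(1)[OF dense] P_prefix[OF that] unfolding N_def by blast
  have place_coords: "place (take (Suc i) (sorted_list_of_set (fst (P i')))) c = place (map N [0..<length c]) c"
    if "i \<le> i'" "length c \<le> Suc i" for i i' c
    using place_take[of "map N [0..<Suc i]" c] that coords[OF that(1)]
    by (simp add: take_map min_def del: upt_Suc)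
  have lim: "(\<lambda>i. x i c) \<longlonglongrightarrow> lim (\<lambda>i. x i c)" for c
  proof (rule convergent_LIMSEQ_iff[THEN iffD1, OF Cauchy_convergent],
      rule Cauchy_if_common_approximation[OF LIMSEQ_inverse_real_of_nat])
    fix i i' assume "max (to_nat c) (length c) \<le> i" "i \<le> i'"
    then show "dist (\<delta> (snd (from_nat (b i) :: nat \<times> nat list) ! to_nat c)) (x i' c) < inverse (real (Suc i))"
      using code_prefix_decode(2)[OF dense, of i "P i'" b "to_nat c"] P_prefix[of i i']
        place_coords[of i i' c] unfolding x_def by simp
  qed
  have "(1 / C) * supnorm (\<lambda>k. rat_vec c k - rat_vec c' k) \<le> dist (x i c) (x i c') \<and>
        dist (x i c) (x i c') \<le> C * supnorm (\<lambda>k. rat_vec c k - rat_vec c' k)"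
    if "max (length c) (length c') \<le> i" for i c c'
  proof -
    let ?S = "take (Suc i) (sorted_list_of_set (fst (P i)))"
    have S: "distinct ?S" "length ?S = Suc i" "set ?S \<subseteq> fst (P i)"
      using P_prefix[of i i] Vlip_finite[OF P] set_take_subset[of "Suc i" "sorted_list_of_set (fst (P i))"]
      by (auto simp: length_code)
    then have "length c \<le> length ?S" "length c' \<le> length ?S" using that by auto
    from Vlip_place_bilip[OF P S(1,3) this] show ?thesis
      using place_coords[of i i c] place_coords[of i i c'] that unfolding x_def by simp
  qed
  then have "(1 / C) * supnorm (\<lambda>k. rat_vec c k - rat_vec c' k) \<le> dist (lim (\<lambda>i. x i c)) (lim (\<lambda>i. x i c')) \<and>
        dist (lim (\<lambda>i. x i c)) (lim (\<lambda>i. x i c')) \<le> C * supnorm (\<lambda>k. rat_vec c k - rat_vec c' k)" for c c'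
    by (intro bilip_bounds_limit[OF lim lim tendsto_const] eventually_sequentiallyI)
  then show ?thesis by (rule c0_bilip_embeds_if_rat_vec_bilip[OF C])
qed

lemma c0_bilip_embeds_imp_index_ge_omega1:
  assumes "c0_bilip_embeds TYPE('a::metric_space)"
  shows "Lip_c0_index_ge_omega1 TYPE('a)"
proof -
  obtain F :: "(nat \<Rightarrow> real) \<Rightarrow> 'a" and C where C: "C > 0" and
    F: "\<forall>x\<in>c0. \<forall>y\<in>c0. (1 / C) * supnorm (\<lambda>n. x n - y n) \<le> dist (F x) (F y) \<and>
           dist (F x) (F y) \<le> C * supnorm (\<lambda>n. x n - y n)"
    using assms unfolding c0_bilip_embeds_def by blast
  define W :: "'a bunch set" where "W = {(G, restrict F (fns \<rat> G)) | G. finite G}"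
  have "W \<subseteq> Vlip TYPE('a) C"
  proof
    fix p assume "p \<in> W"
    then obtain G where G: "finite G" and p: "p = (G, restrict F (fns \<rat> G))"
      unfolding W_def by blast
    from G have "fns \<rat> G \<subseteq> c0" by (rule fns_subset_c0)
    then show "p \<in> Vlip TYPE('a) C" unfolding p Vlip_def using G F by auto
  qed
  moreover have "\<exists>q\<in>W. bunch_le \<rat> p q \<and> p \<noteq> q" if "p \<in> W" for p
  proof -
    obtain G where G: "finite G" and p: "p = (G, restrict F (fns \<rat> G))"
      using \<open>p \<in> W\<close> unfolding W_def by blast
    define m where "m = Suc (Max (insert 0 G))"
    define q where "q = (insert m G, restrict F (fns \<rat> (insert m G)))"
    have "m \<notin> G" using G Max_ge[of "insert 0 G"] unfolding m_def by fastforce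
    then have "p \<noteq> q" unfolding p q_def by auto
    moreover have "bunch_le \<rat> p q"
      using initial_segment_insert_Max[OF G] fns_mono[of G "insert m G" \<rat>]
      unfolding p q_def m_def bunch_le_def by auto
    moreover have "q \<in> W" using G unfolding q_def W_def by auto
    ultimately show ?thesis by blast
  qed
  ultimately have "W \<subseteq> deriv_at \<rat> r (Vlip TYPE('a) C) a" if "Well_order r" for r :: "nat rel" and a
    using subset_deriv_at_if_extendable[OF that] by blast
  moreover have "({}, restrict F (fns \<rat> {})) \<in> W" unfolding W_def by auto
  ultimately have "deriv_at \<rat> r (Vlip TYPE('a) C) a \<noteq> {}" if "Well_order r" for r :: "nat rel" and a
    using that by blast
  then show ?thesis
    unfolding Lip_c0_index_ge_omega1_def using C by (intro allI impI ballI exI[of _ C] conjI)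
qed

lemma dense_sequence_if_separable:
  assumes "\<exists>D :: 'a set. countable D \<and> closure D = UNIV"
  obtains \<delta> :: "nat \<Rightarrow> 'a::metric_space" where "\<And>y e. e > 0 \<Longrightarrow> \<exists>m. dist (\<delta> m) y < e"
proof -
  obtain D :: "'a set" where D: "countable D" "closure D = UNIV" using assms by blast
  have "\<exists>m. dist (from_nat_into D m) y < e" if "e > 0" for y e
  proof -
    obtain x where "x \<in> D" "dist x y < e"
      using \<open>e > 0\<close> D(2) closure_approachable[of y D] by auto
    then show ?thesis using from_nat_into_surj[OF D(1)] by metis
  qed
  then show ?thesis by (rule that)
qed

definition code_tree :: "'a::metric_space itself \<Rightarrow> (nat \<Rightarrow> 'a) \<Rightarrow> nat list set" where
  "code_tree T \<delta> = insert [] {n # code \<delta> p | n p. 1 \<le> n \<and> p \<in> Vlip T (real n)}"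

lemma no_kb_descending_in_code_tree:
  fixes \<delta> :: "nat \<Rightarrow> 'a::complete_space"
  assumes dense: "\<And>y e. e > 0 \<Longrightarrow> \<exists>m. dist (\<delta> m) y < e"
    and no_embedding: "\<not> c0_bilip_embeds TYPE('a)"
  shows "\<nexists>s. \<forall>k. s k \<in> code_tree TYPE('a) \<delta> \<and> kb_less (s (Suc k)) (s k)"
proof
  assume "\<exists>s. \<forall>k. s k \<in> code_tree TYPE('a) \<delta> \<and> kb_less (s (Suc k)) (s k)"
  then obtain s where s: "\<And>k. s k \<in> code_tree TYPE('a) \<delta>" "\<And>k. kb_less (s (Suc k)) (s k)" by blast
  obtain b where b: "\<And>i. \<exists>k. i \<le> length (s k) \<and> take i (s k) = map b [0..<i]"
    using kb_descending_branch[of s, OF s(2)] by blast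
  have tail: "1 \<le> b 0 \<and> (\<exists>p \<in> Vlip TYPE('a) (real (b 0)).
      i \<le> length (code \<delta> p) \<and> take i (code \<delta> p) = map (\<lambda>k. b (Suc k)) [0..<i])" for i
  proof -
    obtain k where k: "Suc i \<le> length (s k)" "take (Suc i) (s k) = map b [0..<Suc i]"
      using b by blast
    then obtain n p where np: "s k = n # code \<delta> p" "1 \<le> n" "p \<in> Vlip TYPE('a) (real n)"
      using s(1)[of k] unfolding code_tree_def by auto
    have "map b [0..<Suc i] = b 0 # map (\<lambda>k. b (Suc k)) [0..<i]"
      by (simp add: map_upt_Suc del: upt_Suc)
    then show ?thesis using k np by auto
  qed
  have "0 < real (b 0)" using tail[of 0] by simp
  from c0_bilip_embeds_if_code_branch[OF dense this] tail have "c0_bilip_embeds TYPE('a)"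
    by blast
  with no_embedding show False by blast
qed

lemma c0_bilip_embeds_if_index_ge_omega1:
  assumes sep: "\<exists>D :: 'a::complete_space set. countable D \<and> closure D = UNIV"
    and index: "Lip_c0_index_ge_omega1 TYPE('a)"
  shows "c0_bilip_embeds TYPE('a)"
proof (rule ccontr)
  assume no_embedding: "\<not> c0_bilip_embeds TYPE('a)"
  obtain \<delta> :: "nat \<Rightarrow> 'a" where dense: "\<And>y e. e > 0 \<Longrightarrow> \<exists>m. dist (\<delta> m) y < e"
    using dense_sequence_if_separable[OF sep] by blast
  let ?A = "code_tree TYPE('a) \<delta>"
  have wo: "Well_order (kb_order_nat ?A)"
    using no_kb_descending_in_code_tree[OF dense no_embedding] by (rule Well_order_kb_order_nat)
  have root: "[] \<in> ?A" unfolding code_tree_def by simp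
  then obtain C where C: "C > 0" "deriv_at \<rat> (kb_order_nat ?A) (Vlip TYPE('a) C) (to_nat ([] :: nat list)) \<noteq> {}"
    using index wo to_nat_in_Field_kb_order_nat unfolding Lip_c0_index_ge_omega1_def by blast
  define n where "n = nat \<lceil>C\<rceil>"
  have "1 \<le> n" "C \<le> real n" unfolding n_def using C(1) by linarith+
  then have tagged_code: "n # code \<delta> p \<in> ?A" if "p \<in> Vlip TYPE('a) C" for p
    using Vlip_mono[OF C(1)] that unfolding code_tree_def by blast
  have "deriv_at \<rat> (kb_order_nat ?A) (Vlip TYPE('a) C) (to_nat ([] :: nat list)) = {}"
  proof (rule deriv_at_eq_empty_if_ranks_below[OF wo, where \<rho> = "\<lambda>p. to_nat (n # code \<delta> p)"])
    fix p q assume pq: "p \<in> Vlip TYPE('a) C" "q \<in> Vlip TYPE('a) C" "bunch_le \<rat> p q" "p \<noteq> q"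
    have "kb_less (n # code \<delta> q) (n # code \<delta> p)"
      using code_extends[OF pq, of \<delta>] by (intro kb_less_if_extension) auto
    then show "(to_nat (n # code \<delta> q), to_nat (n # code \<delta> p)) \<in> kb_order_nat ?A - Id"
      using tagged_code pq by (intro kb_order_nat_strictI)
  next
    fix p assume "p \<in> Vlip TYPE('a) C"
    then show "(to_nat (n # code \<delta> p), to_nat ([] :: nat list)) \<in> kb_order_nat ?A - Id"
      using tagged_code root by (intro kb_order_nat_strictI kb_less_Nil) auto
  qed
  with C(2) show False by blast
qed

theorem proposition3p3:
  assumes "\<exists>D :: 'a::complete_space set. countable D \<and> closure D = UNIV"
  shows "c0_bilip_embeds TYPE('a) \<longleftrightarrow> Lip_c0_index_ge_omega1 TYPE('a)"
  using c0_bilip_embeds_imp_index_ge_omega1 c0_bilip_embeds_if_index_ge_omega1[OF assms] by blast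

end
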